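(* Let $x$ be a local minimizer of $J(x)=\int_a^b L(t,x(t),{}^CD_{a+}^{\alpha,\rho}x(t))\,dt$ on the set of functions in $C^1[a,b]$ satisfying those of the boundary conditions $x(a)=x_a$, $x(b)=x_b$ that are imposed (each endpoint value may be fixed or free). Then $$\partial_2L(t,x(t),{}^CD_{a+}^{\alpha,\rho} x(t))-D_{b-}^{\alpha,\rho}\big(\partial_3L(t,x(t),{}^CD_{a+}^{\alpha,\rho} x(t))\big)=0,\quad t\in[a,b].$$ If $x(a)$ is free, then $I_{b-}^{1-\alpha,\rho}\big(\partial_3L(t,x(t),{}^CD_{a+}^{\alpha,\rho}x(t))\big)=0$ at $t=a$. If $x(b)$ is free, then $I_{b-}^{1-\alpha,\rho}\big(\partial_3L(t,x(t),{}^CD_{a+}^{\alpha,\rho}x(t))\big)=0$ at $t=b$.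
   Context: Fix $0<a<b<\infty$, $\alpha\in(0,1)$, $\rho>0$. For $x\in C^1[a,b]$, ${}^CD_{a+}^{\alpha,\rho} x(t)=\frac{\rho^\alpha}{\Gamma(1-\alpha)}\, t^{1-\rho}\frac{d}{dt}\int_a^t \frac{\tau^{\rho-1}}{(t^\rho-\tau^\rho)^\alpha}[x(\tau)-x(a)]\,d\tau=\frac{\rho^\alpha}{\Gamma(1-\alpha)}\int_a^t (t^\rho-\tau^\rho)^{-\alpha}x'(\tau)\,d\tau$. For a function $f$ on $[a,b]$, $I_{b-}^{1-\alpha,\rho} f(t)=\frac{\rho^{\alpha}}{\Gamma(1-\alpha)}\int_t^b (\tau^\rho-t^\rho)^{-\alpha}f(\tau)\,d\tau$ and $D_{b-}^{\alpha,\rho} f(t)=\frac{\rho^\alpha}{\Gamma(1-\alpha)}\frac{d}{dt}\int_t^b (\tau^\rho-t^\rho)^{-\alpha}f(\tau)\,d\tau$. $\partial_i$ denotes the partial derivative with respect to the $i$-th argument. $L:[a,b]\times\mathbb{R}^2\to\mathbb{R}$ is continuously differentiable with respect to its second and third arguments, and for every $x\in C^1[a,b]$ the map $t\mapsto D_{b-}^{\alpha,\rho}(\partial_3L(t,x(t),{}^CD_{a+}^{\alpha,\rho}x(t)))$ is continuous. $C^1[a,b]$ carries the norm $\|x\|=\max|x|+\max|{}^CD_{a+}^{\alpha,\rho}x|$, and local minimizers are taken with respect to this norm. *)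

theory Defs
  imports "HOL-Analysis.Analysis"
begin

definition C1_on :: "real \<Rightarrow> real \<Rightarrow> (real \<Rightarrow> real) \<Rightarrow> bool" where
  "C1_on a b x \<longleftrightarrow>
     (\<exists>x'. (\<forall>t\<in>{a..b}. (x has_real_derivative x' t) (at t within {a..b}))
           \<and> continuous_on {a..b} x')"

text \<open>Left Caputo-Katugampola derivative (second form of the definition, valid on C^1).\<close>
definition caputo_left :: "real \<Rightarrow> real \<Rightarrow> real \<Rightarrow> (real \<Rightarrow> real) \<Rightarrow> real \<Rightarrow> real" where
  "caputo_left a \<alpha> \<rho> x t =
     \<rho> powr \<alpha> / Gamma (1 - \<alpha>) *
       integral {a..t} (\<lambda>\<tau>. (t powr \<rho> - \<tau> powr \<rho>) powr (- \<alpha>) * deriv x \<tau>)"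

text \<open>Right Katugampola fractional integral of order 1-alpha.\<close>
definition int_right :: "real \<Rightarrow> real \<Rightarrow> real \<Rightarrow> (real \<Rightarrow> real) \<Rightarrow> real \<Rightarrow> real" where
  "int_right b \<alpha> \<rho> f t =
     \<rho> powr \<alpha> / Gamma (1 - \<alpha>) *
       integral {t..b} (\<lambda>\<tau>. (\<tau> powr \<rho> - t powr \<rho>) powr (- \<alpha>) * f \<tau>)"

definition deriv_right :: "real \<Rightarrow> real \<Rightarrow> real \<Rightarrow> real \<Rightarrow> (real \<Rightarrow> real) \<Rightarrow> real \<Rightarrow> real" where
  "deriv_right a b \<alpha> \<rho> f t = vector_derivative (int_right b \<alpha> \<rho> f) (at t within {a..b})"

definition partial2 :: "(real \<Rightarrow> real \<Rightarrow> real \<Rightarrow> real) \<Rightarrow> real \<Rightarrow> real \<Rightarrow> real \<Rightarrow> real" where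
  "partial2 L t u v = deriv (\<lambda>w. L t w v) u"

definition partial3 :: "(real \<Rightarrow> real \<Rightarrow> real \<Rightarrow> real) \<Rightarrow> real \<Rightarrow> real \<Rightarrow> real \<Rightarrow> real" where
  "partial3 L t u v = deriv (\<lambda>w. L t u w) v"

definition J_fun :: "real \<Rightarrow> real \<Rightarrow> real \<Rightarrow> real \<Rightarrow> (real \<Rightarrow> real \<Rightarrow> real \<Rightarrow> real) \<Rightarrow> (real \<Rightarrow> real) \<Rightarrow> real" where
  "J_fun a b \<alpha> \<rho> L x = integral {a..b} (\<lambda>t. L t (x t) (caputo_left a \<alpha> \<rho> x t))"

definition admissible :: "real \<Rightarrow> real \<Rightarrow> bool \<Rightarrow> real \<Rightarrow> bool \<Rightarrow> real \<Rightarrow> (real \<Rightarrow> real) \<Rightarrow> bool" where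
  "admissible a b fixa xa fixb xb y \<longleftrightarrow>
     C1_on a b y \<and> (fixa \<longrightarrow> y a = xa) \<and> (fixb \<longrightarrow> y b = xb)"

definition frac_norm :: "real \<Rightarrow> real \<Rightarrow> real \<Rightarrow> real \<Rightarrow> (real \<Rightarrow> real) \<Rightarrow> real" where
  "frac_norm a b \<alpha> \<rho> y =
     (SUP t\<in>{a..b}. \<bar>y t\<bar>) + (SUP t\<in>{a..b}. \<bar>caputo_left a \<alpha> \<rho> y t\<bar>)"

definition local_minimizer ::
  "real \<Rightarrow> real \<Rightarrow> real \<Rightarrow> real \<Rightarrow> (real \<Rightarrow> real \<Rightarrow> real \<Rightarrow> real)
   \<Rightarrow> bool \<Rightarrow> real \<Rightarrow> bool \<Rightarrow> real \<Rightarrow> (real \<Rightarrow> real) \<Rightarrow> bool" where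
  "local_minimizer a b \<alpha> \<rho> L fixa xa fixb xb x \<longleftrightarrow>
     admissible a b fixa xa fixb xb x \<and>
     (\<exists>\<delta>>0. \<forall>y. admissible a b fixa xa fixb xb y \<longrightarrow>
        frac_norm a b \<alpha> \<rho> (\<lambda>t. y t - x t) < \<delta> \<longrightarrow>
        J_fun a b \<alpha> \<rho> L x \<le> J_fun a b \<alpha> \<rho> L y)"

end

theory Submission
  imports Defs
begin

text \<open>Perturb the minimiser along \<open>x + \<epsilon> h\<close>, where \<open>h\<close> is \<open>C\<^sup>1\<close> and vanishes at every endpoint
  whose value is imposed. Since \<open>caputo_left\<close> is linear on \<open>C\<^sup>1\<close> functions, \<open>J (x + \<epsilon> h)\<close> is an
  integral depending smoothly on \<open>\<epsilon>\<close>, and its derivative at \<open>\<epsilon> = 0\<close> vanishes. In that derivative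
  \<open>caputo_left h t\<close> is an integral of \<open>h'\<close> against \<open>kat_kernel\<close>; exchanging the order of integration
  over the triangle \<open>a \<le> \<tau> \<le> t \<le> b\<close> moves the kernel onto \<open>\<partial>\<^sub>3L\<close>, turning the Caputo term into
  \<open>\<integral> h' \<cdot> int_right (\<partial>\<^sub>3L)\<close>, and an ordinary integration by parts yields
  \<open>\<integral> (\<partial>\<^sub>2L - deriv_right (\<partial>\<^sub>3L)) h = h a \<cdot> int_right (\<partial>\<^sub>3L) a\<close>. Bump functions give the
  Euler--Lagrange equation and the direction \<open>h t = b - t\<close> the natural boundary condition at \<open>a\<close>;
  the one at \<open>b\<close> holds trivially, because \<open>int_right\<close> at \<open>b\<close> integrates over \<open>{b..b}\<close>.
  The analytic input is the explicit primitive of the weighted kernel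
  \<open>\<tau> powr (\<rho> - 1) * kat_kernel \<alpha> \<rho> t \<tau>\<close>, which makes the singular kernel integrable and the
  Caputo derivative of a \<open>C\<^sup>1\<close> function continuous.\<close>

lemma continuous_on_Icc_abs_bound:
  fixes f :: "real \<Rightarrow> real"
  assumes "continuous_on {a..b} f"
  obtains M where "\<And>t. t \<in> {a..b} \<Longrightarrow> \<bar>f t\<bar> \<le> M"
  using compact_imp_bounded[OF compact_continuous_image[OF assms compact_Icc]]
  by (force simp: bounded_iff)

lemma abs_integral_le_has_integral:
  fixes f g :: "real \<Rightarrow> real"
  assumes "f integrable_on {p..q}" "(g has_integral I) {p..q}"
    and "\<And>x. x \<in> {p<..<q} \<Longrightarrow> \<bar>f x\<bar> \<le> g x"
  shows "\<bar>integral {p..q} f\<bar> \<le> I"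
proof -
  have "norm (integral {p<..<q} f) \<le> integral {p<..<q} g"
    using assms by (intro integral_norm_bound_integral) (auto simp: integrable_on_open_interval_real)
  then show ?thesis
    using assms(2) by (simp add: integral_open_interval_real[symmetric] integral_unique)
qed

lemma continuous_on_increment_bound:
  fixes U :: "real \<Rightarrow> real"
  assumes "\<And>s t. s \<in> S \<Longrightarrow> t \<in> S \<Longrightarrow> \<bar>U t - U s\<bar> \<le> B s t"
    and "\<And>s. s \<in> S \<Longrightarrow> (B s \<longlongrightarrow> 0) (at s within S)"
  shows "continuous_on S U"
  unfolding continuous_on_def
proof
  fix s assume s: "s \<in> S"
  have "((\<lambda>t. U t - U s) \<longlongrightarrow> 0) (at s within S)"
    by (rule Lim_null_comparison[OF _ assms(2)[OF s]])
       (use assms(1) s in \<open>auto simp: eventually_at_filter\<close>)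
  then show "(U \<longlongrightarrow> U s) (at s within S)" by (simp add: Lim_null[symmetric])
qed

lemma absolutely_integrable_continuous_mult:
  fixes \<psi> g :: "real \<Rightarrow> real"
  assumes "continuous_on {p..q} \<psi>" "g absolutely_integrable_on {p..q}"
  shows "(\<lambda>x. \<psi> x * g x) absolutely_integrable_on {p..q}"
proof (rule absolutely_integrable_bounded_measurable_product_real)
  show "\<psi> \<in> borel_measurable (lebesgue_on {p..q})"
    using assms(1) by (intro continuous_imp_measurable_on_sets_lebesgue) auto
  show "bounded (\<psi> ` {p..q})"
    using assms(1) by (intro compact_imp_bounded compact_continuous_image) auto
qed (use assms in auto)

lemma SUP_abs_scale_le:
  fixes g :: "real \<Rightarrow> real"
  assumes "a \<le> b" "continuous_on {a..b} g"
  shows "(SUP t\<in>{a..b}. \<bar>c * g t\<bar>) \<le> \<bar>c\<bar> * (SUP t\<in>{a..b}. \<bar>g t\<bar>)"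
proof (rule cSUP_least)
  obtain M where "\<And>t. t \<in> {a..b} \<Longrightarrow> \<bar>g t\<bar> \<le> M"
    using continuous_on_Icc_abs_bound[OF assms(2)] by blast
  then have "bdd_above ((\<lambda>t. \<bar>g t\<bar>) ` {a..b})" by (intro bdd_aboveI2) auto
  then show "\<bar>c * g t\<bar> \<le> \<bar>c\<bar> * (SUP t\<in>{a..b}. \<bar>g t\<bar>)" if "t \<in> {a..b}" for t
    unfolding abs_mult using that by (intro mult_left_mono cSUP_upper) auto
qed (use assms in auto)

lemma continuous_on_compose_triple:
  fixes P :: "real \<Rightarrow> real \<Rightarrow> real \<Rightarrow> real" and f g h :: "'a::topological_space \<Rightarrow> real"
  assumes P: "continuous_on ({a..b} \<times> UNIV \<times> UNIV) (\<lambda>(t, u, v). P t u v)"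
    and f: "continuous_on S f" and g: "continuous_on S g" and h: "continuous_on S h"
    and fS: "f ` S \<subseteq> {a..b}"
  shows "continuous_on S (\<lambda>s. P (f s) (g s) (h s))"
proof -
  have "continuous_on S ((\<lambda>(t, u, v). P t u v) \<circ> (\<lambda>s. (f s, g s, h s)))"
    by (rule continuous_on_compose[OF _ continuous_on_subset[OF P]])
       (use fS in \<open>auto intro!: continuous_intros f g h\<close>)
  then show ?thesis by (simp add: o_def)
qed

section \<open>Fubini's theorem on a triangle\<close>

lemma set_integrable_lborel_if_absolutely_integrable:
  fixes g :: "real \<Rightarrow> real"
  assumes "g absolutely_integrable_on S" "(\<lambda>x. indicator S x * g x) \<in> borel_measurable lborel"
  shows "set_integrable lborel S g"
  using assms integrable_completion[OF assms(2)] by (simp add: set_integrable_def)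

lemma lborel_integral_indicator_Icc:
  fixes g :: "real \<Rightarrow> real"
  assumes "integrable lborel (\<lambda>x. indicator {p..q} x * g x)"
  shows "(\<integral>x. indicator {p..q} x * g x \<partial>lborel) = integral {p..q} g"
  using set_borel_integral_eq_integral(2)[of "{p..q}" g] assms
  by (simp add: set_integrable_def set_lebesgue_integral_def)

lemma integrable_lborel_pair_if_row_bound:
  fixes H :: "real \<Rightarrow> real \<Rightarrow> real"
  assumes "(\<lambda>(t, \<tau>). H t \<tau>) \<in> borel_measurable (lborel \<Otimes>\<^sub>M lborel)"
    and rows: "\<And>t. integrable lborel (H t)"
    and bound: "\<And>t. (\<integral>\<tau>. \<bar>H t \<tau>\<bar> \<partial>lborel) \<le> indicator {a..b} t * B"
  shows "integrable (lborel \<Otimes>\<^sub>M lborel) (\<lambda>(t, \<tau>). H t \<tau>)"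
proof (rule lborel_pair.Fubini_integrable)
  show "integrable lborel (\<lambda>t. \<integral>\<tau>. norm (case (t, \<tau>) of (t, \<tau>) \<Rightarrow> H t \<tau>) \<partial>lborel)"
  proof (rule Bochner_Integration.integrable_bound[where f = "\<lambda>t. indicator {a..b} t * B"])
    show "integrable lborel (\<lambda>t. indicator {a..b} t * B :: real)"
      by (intro integrable_mult_left integrable_real_indicator) (auto simp: emeasure_lborel_Icc_eq)
    have "norm (\<integral>\<tau>. \<bar>H t \<tau>\<bar> \<partial>lborel) \<le> norm (indicator {a..b} t * B :: real)" for t
      using bound[of t] Bochner_Integration.integral_nonneg[of lborel "\<lambda>\<tau>. \<bar>H t \<tau>\<bar>"] by simp
    then show "AE t in lborel. norm (\<integral>\<tau>. norm (case (t, \<tau>) of (t, \<tau>) \<Rightarrow> H t \<tau>) \<partial>lborel)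
                                \<le> norm (indicator {a..b} t * B)"
      by (intro AE_I2) simp
  qed (use assms(1) in measurable)
qed (use assms rows in auto)

lemma integral_swap_triangle:
  fixes G :: "real \<Rightarrow> real \<Rightarrow> real"
  assumes G[measurable]: "(\<lambda>(t, \<tau>). G t \<tau>) \<in> borel_measurable (lborel \<Otimes>\<^sub>M lborel)"
    and rows: "\<And>t. t \<in> {a..b} \<Longrightarrow> G t absolutely_integrable_on {a..t}"
    and columns: "\<And>\<tau>. \<tau> \<in> {a..b} \<Longrightarrow> (\<lambda>t. G t \<tau>) absolutely_integrable_on {\<tau>..b}"
    and bound: "\<And>t. t \<in> {a..b} \<Longrightarrow> integral {a..t} (\<lambda>\<tau>. \<bar>G t \<tau>\<bar>) \<le> B"
  shows "integral {a..b} (\<lambda>t. integral {a..t} (G t))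
       = integral {a..b} (\<lambda>\<tau>. integral {\<tau>..b} (\<lambda>t. G t \<tau>))"
proof -
  define H where "H t \<tau> = (if a \<le> \<tau> \<and> \<tau> \<le> t \<and> t \<le> b then G t \<tau> else 0)" for t \<tau>
  have H[measurable]: "(\<lambda>(t, \<tau>). H t \<tau>) \<in> borel_measurable (lborel \<Otimes>\<^sub>M lborel)"
    unfolding H_def case_prod_beta' using G by measurable
  have row_eq: "H t = (\<lambda>\<tau>. indicator {a..b} t * (indicator {a..t} \<tau> * G t \<tau>))" for t
    by (auto simp: H_def indicator_def fun_eq_iff)
  have column_eq: "(\<lambda>t. H t \<tau>) = (\<lambda>t. indicator {a..b} \<tau> * (indicator {\<tau>..b} t * G t \<tau>))" for \<tau>
    by (auto simp: H_def indicator_def fun_eq_iff)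
  have row_integrable: "set_integrable lborel {a..t} (G t)" if "t \<in> {a..b}" for t
    using rows[OF that] measurable_Pair2[OF H, of t] row_eq[of t] that
    by (intro set_integrable_lborel_if_absolutely_integrable) (auto simp: case_prod_beta')
  have column_integrable: "set_integrable lborel {\<tau>..b} (\<lambda>t. G t \<tau>)" if "\<tau> \<in> {a..b}" for \<tau>
    using columns[OF that] measurable_Pair1[OF H, of \<tau>] column_eq[of \<tau>] that
    by (intro set_integrable_lborel_if_absolutely_integrable) (auto simp: case_prod_beta')
  have inner_rows: "(\<integral>\<tau>. H t \<tau> \<partial>lborel) = indicator {a..b} t * integral {a..t} (G t)" for t
    using row_integrable[of t] lborel_integral_indicator_Icc[of a t "G t"]
    by (cases "t \<in> {a..b}") (auto simp: row_eq set_integrable_def)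
  have inner_columns: "(\<integral>t. H t \<tau> \<partial>lborel) = indicator {a..b} \<tau> * integral {\<tau>..b} (\<lambda>t. G t \<tau>)" for \<tau>
    using column_integrable[of \<tau>] lborel_integral_indicator_Icc[of \<tau> b "\<lambda>t. G t \<tau>"]
    by (cases "\<tau> \<in> {a..b}") (auto simp: column_eq set_integrable_def)
  have "integrable (lborel \<Otimes>\<^sub>M lborel) (\<lambda>(t, \<tau>). H t \<tau>)"
  proof (rule integrable_lborel_pair_if_row_bound[OF H])
    show "integrable lborel (H t)" for t
      using row_integrable[of t] by (cases "t \<in> {a..b}") (auto simp: row_eq set_integrable_def)
    show "(\<integral>\<tau>. \<bar>H t \<tau>\<bar> \<partial>lborel) \<le> indicator {a..b} t * B" for t
    proof (cases "t \<in> {a..b}")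
      case True
      then have "(\<lambda>\<tau>. \<bar>H t \<tau>\<bar>) = (\<lambda>\<tau>. indicator {a..t} \<tau> * \<bar>G t \<tau>\<bar>)"
        by (auto simp: row_eq indicator_def fun_eq_iff)
      moreover have "integrable lborel (\<lambda>\<tau>. indicator {a..t} \<tau> * \<bar>G t \<tau>\<bar>)"
        using set_integrable_abs[OF row_integrable[OF True]] by (simp add: set_integrable_def)
      ultimately show ?thesis
        using bound[OF True] lborel_integral_indicator_Icc[of a t "\<lambda>\<tau>. \<bar>G t \<tau>\<bar>"] True by simp
    qed (simp add: row_eq)
  qed
  then have "(\<integral>\<tau>. (\<integral>t. H t \<tau> \<partial>lborel) \<partial>lborel) = (\<integral>t. (\<integral>\<tau>. H t \<tau> \<partial>lborel) \<partial>lborel)"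
    and "integrable lborel (\<lambda>t. \<integral>\<tau>. H t \<tau> \<partial>lborel)"
    and "integrable lborel (\<lambda>\<tau>. \<integral>t. H t \<tau> \<partial>lborel)"
    by (simp_all add: lborel_pair.Fubini_integral lborel_pair.integrable_fst lborel_pair.integrable_snd)
  then show ?thesis
    unfolding inner_rows inner_columns by (simp add: lborel_integral_indicator_Icc)
qed

section \<open>Differentiation under the integral sign\<close>

lemma has_real_derivative_along_line:
  fixes f f\<^sub>u f\<^sub>v :: "real \<Rightarrow> real \<Rightarrow> real"
  assumes du: "\<And>x y. ((\<lambda>w. f w y) has_real_derivative f\<^sub>u x y) (at x)"
    and dv: "\<And>x y. ((\<lambda>w. f x w) has_real_derivative f\<^sub>v x y) (at y)"
    and cv: "continuous_on UNIV (\<lambda>(u, v). f\<^sub>v u v)"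
  shows "((\<lambda>\<epsilon>. f (u + \<epsilon> * p) (v + \<epsilon> * q)) has_real_derivative
           f\<^sub>u (u + \<epsilon> * p) (v + \<epsilon> * q) * p + f\<^sub>v (u + \<epsilon> * p) (v + \<epsilon> * q) * q) (at \<epsilon>)"
proof -
  define u' v' where "u' = u + \<epsilon> * p" and "v' = v + \<epsilon> * q"
  have "((\<lambda>(u, v). f u v) has_derivative (\<lambda>(du, dv). f\<^sub>u u' v' * du + f\<^sub>v u' v' * dv)) (at (u', v'))"
  proof -
    have "((\<lambda>(u, v). f u v) has_derivative (\<lambda>(du, dv). f\<^sub>u u' v' * du + blinfun_mult_right (f\<^sub>v u' v') dv))
        (at (u', v') within UNIV \<times> UNIV)"
    proof (rule has_derivative_partialsI)
      show "((\<lambda>x. f x v') has_derivative (*) (f\<^sub>u u' v')) (at u' within UNIV)"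
        using du[where x=u' and y=v'] by (simp add: has_field_derivative_def mult.commute)
      show "((\<lambda>w. f x w) has_derivative blinfun_apply (blinfun_mult_right (f\<^sub>v x y))) (at y within UNIV)" for x y
        using dv[where x=x and y=y] by (simp add: has_field_derivative_def mult.commute)
      show "continuous (at (u', v') within UNIV \<times> UNIV) (\<lambda>(x, y). blinfun_mult_right (f\<^sub>v x y))"
      proof -
        have "isCont (\<lambda>z. f\<^sub>v (fst z) (snd z)) (u', v')"
          using cv by (simp add: continuous_on_eq_continuous_at split_beta)
        then have "isCont (blinfun_mult_right \<circ> (\<lambda>z. f\<^sub>v (fst z) (snd z))) (u', v')"
          by (intro continuous_at_compose linear_continuous_at[OF bounded_linear_blinfun_mult_right])
        then show ?thesis by (simp add: o_def case_prod_beta')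
      qed
    qed auto
    then show ?thesis by simp
  qed
  moreover have "((\<lambda>\<epsilon>. (u + \<epsilon> * p, v + \<epsilon> * q)) has_derivative (\<lambda>h. (h * p, h * q))) (at \<epsilon>)"
    by (auto intro!: derivative_eq_intros)
  ultimately have "((\<lambda>\<epsilon>. f (u + \<epsilon> * p) (v + \<epsilon> * q)) has_derivative
      (\<lambda>h. f\<^sub>u u' v' * (h * p) + f\<^sub>v u' v' * (h * q))) (at \<epsilon>)"
    using has_derivative_compose[of "\<lambda>\<epsilon>. (u + \<epsilon> * p, v + \<epsilon> * q)"] by (fastforce simp: u'_def v'_def)
  then show ?thesis
    unfolding has_field_derivative_def u'_def v'_def
    by (rule has_derivative_eq_rhs) (simp add: fun_eq_iff algebra_simps)
qed

lemma has_real_derivative_integral_along_line: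
  fixes L P2 P3 :: "real \<Rightarrow> real \<Rightarrow> real \<Rightarrow> real" and u v p q :: "real \<Rightarrow> real"
  assumes d2: "\<And>t x y. t \<in> {a..b} \<Longrightarrow> ((\<lambda>w. L t w y) has_real_derivative P2 t x y) (at x)"
    and d3: "\<And>t x y. t \<in> {a..b} \<Longrightarrow> ((\<lambda>w. L t x w) has_real_derivative P3 t x y) (at y)"
    and c2: "continuous_on ({a..b} \<times> UNIV \<times> UNIV) (\<lambda>(t, u, v). P2 t u v)"
    and c3: "continuous_on ({a..b} \<times> UNIV \<times> UNIV) (\<lambda>(t, u, v). P3 t u v)"
    and cu: "continuous_on {a..b} u" and cv: "continuous_on {a..b} v"
    and cp: "continuous_on {a..b} p" and cq: "continuous_on {a..b} q"
    and int: "\<And>\<epsilon>. (\<lambda>t. L t (u t + \<epsilon> * p t) (v t + \<epsilon> * q t)) integrable_on {a..b}"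
  shows "((\<lambda>\<epsilon>. integral {a..b} (\<lambda>t. L t (u t + \<epsilon> * p t) (v t + \<epsilon> * q t))) has_real_derivative
          integral {a..b} (\<lambda>t. P2 t (u t) (v t) * p t + P3 t (u t) (v t) * q t)) (at 0)"
proof -
  define D where "D \<epsilon> t = P2 t (u t + \<epsilon> * p t) (v t + \<epsilon> * q t) * p t
                         + P3 t (u t + \<epsilon> * p t) (v t + \<epsilon> * q t) * q t" for \<epsilon> t
  have "((\<lambda>\<epsilon>. integral (cbox a b) (\<lambda>t. L t (u t + \<epsilon> * p t) (v t + \<epsilon> * q t))) has_real_derivative
          integral (cbox a b) (D 0)) (at 0 within UNIV)"
  proof (rule leibniz_rule_field_derivative)
    fix \<epsilon> t assume t: "t \<in> cbox a b"
    have "continuous_on UNIV (\<lambda>z. P3 t (fst z) (snd z))"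
      using t by (intro continuous_on_compose_triple[OF c3]) (auto intro!: continuous_intros)
    then show "((\<lambda>\<epsilon>. L t (u t + \<epsilon> * p t) (v t + \<epsilon> * q t)) has_real_derivative D \<epsilon> t) (at \<epsilon> within UNIV)"
      unfolding D_def using t
      by (intro has_real_derivative_along_line[where f = "L t"] d2 d3) (auto simp: case_prod_beta')
  next
    show "continuous_on (UNIV \<times> cbox a b) (\<lambda>(\<epsilon>, t). D \<epsilon> t)"
      unfolding D_def case_prod_beta'
      by (intro continuous_intros continuous_on_compose_triple[OF c2] continuous_on_compose_triple[OF c3]
          continuous_on_compose2[OF cu] continuous_on_compose2[OF cv]
          continuous_on_compose2[OF cp] continuous_on_compose2[OF cq]) auto
  qed (use int in auto)
  then show ?thesis by (simp add: D_def[abs_def])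
qed

section \<open>The fundamental lemma of the calculus of variations\<close>

lemma C1_on_imp_continuous_on: "C1_on a b x \<Longrightarrow> continuous_on {a..b} x"
  unfolding C1_on_def by (metis DERIV_continuous_on)

lemma has_real_derivative_max0_power2:
  "((\<lambda>u. (max 0 u)\<^sup>2) has_real_derivative 2 * max 0 u) (at u)" for u :: real
proof (cases u "0 :: real" rule: linorder_cases)
  case less
  have "\<forall>\<^sub>F w in nhds u. 0 = (max 0 w)\<^sup>2"
    using eventually_nhds_in_open[of "{..<0}" u] less by (auto elim!: eventually_mono)
  then show ?thesis
    using less by (subst DERIV_cong_ev[OF refl _ refl, of _ "\<lambda>_. 0"]) auto
next
  case greater
  have "\<forall>\<^sub>F w in nhds u. (max 0 w)\<^sup>2 = w\<^sup>2"
    using eventually_nhds_in_open[of "{0<..}" u] greater by (auto elim!: eventually_mono)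
  then show ?thesis
    using greater by (subst DERIV_cong_ev[OF refl _ refl, of _ "\<lambda>w. w\<^sup>2"]) (auto intro!: derivative_eq_intros)
next
  case equal
  have "((\<lambda>w. ((max 0 w)\<^sup>2 - (max 0 0)\<^sup>2) / (w - 0) - 2 * max 0 0) \<longlongrightarrow> 0) (at (0 :: real))"
  proof (rule Lim_null_comparison[where g = "\<lambda>w. \<bar>w\<bar>"])
    show "\<forall>\<^sub>F w in at 0. norm (((max 0 w)\<^sup>2 - (max 0 0)\<^sup>2) / (w - 0) - 2 * max 0 0) \<le> \<bar>w :: real\<bar>"
      by (intro always_eventually allI) (auto simp: max_def power2_eq_square)
  qed (auto intro!: tendsto_eq_intros)
  then show ?thesis
    unfolding equal has_field_derivative_iff by (simp add: Lim_null[symmetric])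
qed

lemma bump_function:
  fixes t r :: real
  assumes "0 < r"
  obtains h where "\<And>a b. C1_on a b h" "\<And>s. 0 \<le> h s" "\<And>s. r \<le> \<bar>s - t\<bar> \<Longrightarrow> h s = 0" "0 < h t"
proof
  define h' where "h' s = 2 * max 0 (r\<^sup>2 - (s - t)\<^sup>2) * (- 2 * (s - t))" for s
  show "C1_on a b (\<lambda>s. (max 0 (r\<^sup>2 - (s - t)\<^sup>2))\<^sup>2)" for a b
    unfolding C1_on_def
  proof (intro exI conjI ballI)
    fix s
    have "((\<lambda>s. r\<^sup>2 - (s - t)\<^sup>2) has_real_derivative - 2 * (s - t)) (at s)"
      by (auto intro!: derivative_eq_intros)
    from DERIV_chain2[OF has_real_derivative_max0_power2 this]
    show "((\<lambda>s. (max 0 (r\<^sup>2 - (s - t)\<^sup>2))\<^sup>2) has_real_derivative h' s) (at s within {a..b})"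
      unfolding h'_def by (rule has_field_derivative_at_within)
  qed (auto simp: h'_def intro!: continuous_intros)
  show "r \<le> \<bar>s - t\<bar> \<Longrightarrow> (max 0 (r\<^sup>2 - (s - t)\<^sup>2))\<^sup>2 = 0" for s
    using assms power_mono[of r "\<bar>s - t\<bar>" 2] by (simp add: max_def)
qed (use assms in auto)

lemma fundamental_lemma_calculus_of_variations:
  assumes ab: "a < b" and e: "continuous_on {a..b} e"
    and vanishing: "\<And>h. C1_on a b h \<Longrightarrow> h a = 0 \<Longrightarrow> h b = 0 \<Longrightarrow> integral {a..b} (\<lambda>s. e s * h s) = 0"
    and t: "t \<in> {a..b}"
  shows "e t = 0"
proof -
  have interior: "e t = 0" if t: "t \<in> {a<..<b}" for t
  proof (rule ccontr)
    assume "e t \<noteq> 0"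
    define e' where "e' s = sgn (e t) * e s" for s
    have pos: "0 < e' t" using \<open>e t \<noteq> 0\<close> by (simp add: e'_def sgn_if)
    have e': "continuous_on {a..b} e'" unfolding e'_def by (intro continuous_intros e)
    then have "isCont e' t"
      using t by (intro continuous_on_interior[OF e']) auto
    then obtain d where "0 < d" and d: "\<And>s. \<bar>s - t\<bar> < d \<Longrightarrow> 0 < e' s"
      using pos unfolding continuous_at_eps_delta dist_real_def
      by (metis abs_minus_commute abs_diff_less_iff diff_self)
    define r where "r = min d (min (t - a) (b - t))"
    have "0 < r" using \<open>0 < d\<close> t by (simp add: r_def)
    then obtain h where h: "\<And>a b. C1_on a b h" "\<And>s. 0 \<le> h s" "\<And>s. r \<le> \<bar>s - t\<bar> \<Longrightarrow> h s = 0"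
      "0 < h t"
      using bump_function[where t = t] by metis
    have "continuous_on {a..b} h" using h(1) by (rule C1_on_imp_continuous_on)
    then have eh: "continuous_on {a..b} (\<lambda>s. e' s * h s)" by (intro continuous_intros e')
    have "integral {a..b} (\<lambda>s. e' s * h s) = sgn (e t) * integral {a..b} (\<lambda>s. e s * h s)"
      by (simp add: e'_def mult.assoc)
    also have "\<dots> = 0" using vanishing[OF h(1)] h(3) t by (simp add: r_def)
    finally have "((\<lambda>s. e' s * h s) has_integral 0) {a..b}"
      using integrable_continuous_real[OF eh] by (metis has_integral_integrable_integral)
    moreover have "0 \<le> e' s * h s" for s
      using d[of s] h(2,3)[of s] by (cases "\<bar>s - t\<bar> < r") (auto simp: r_def)
    ultimately have "e' t * h t = 0"
      using eh t ab by (intro has_integral_0_cbox_imp_0[of a b "\<lambda>s. e' s * h s"]) auto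
    with pos h(4) show False by simp
  qed
  have "t \<in> closure {a<..<b}" using t ab by simp
  moreover have "continuous_on (closure {a<..<b}) e" using ab e by simp
  ultimately show ?thesis
    using continuous_constant_on_closure[of "{a<..<b}" e 0] interior by blast
qed

section \<open>The Katugampola kernel\<close>

text \<open>At \<open>\<tau> = t\<close> the kernel takes the junk value \<open>0\<close> (as \<open>0 powr x = 0\<close>) instead of blowing up;
  this is why pointwise comparisons of integrands below are made on open intervals only.\<close>

definition kat_kernel :: "real \<Rightarrow> real \<Rightarrow> real \<Rightarrow> real \<Rightarrow> real" where
  "kat_kernel \<alpha> \<rho> t \<tau> = (t powr \<rho> - \<tau> powr \<rho>) powr (- \<alpha>)"

lemma kat_kernel_nonneg [simp]: "0 \<le> kat_kernel \<alpha> \<rho> t \<tau>"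
  by (simp add: kat_kernel_def)

lemma kat_kernel_antimono:
  assumes "0 < \<tau>" "\<tau> < s" "s \<le> t" "0 < \<alpha>" "0 < \<rho>"
  shows "kat_kernel \<alpha> \<rho> t \<tau> \<le> kat_kernel \<alpha> \<rho> s \<tau>"
proof -
  have "0 < s powr \<rho> - \<tau> powr \<rho>" using assms by (simp add: powr_less_mono2)
  moreover have "s powr \<rho> \<le> t powr \<rho>" using assms by (intro powr_mono2) auto
  ultimately show ?thesis
    unfolding kat_kernel_def using assms by (intro powr_mono2') auto
qed

text \<open>The weight \<open>\<tau> powr (\<rho> - 1)\<close> is, up to the factor \<open>\<rho>\<close>, the derivative of \<open>\<tau> powr \<rho>\<close>;
  with it the singular kernel has the explicit primitive
  \<open>\<mp>(t powr \<rho> - \<tau> powr \<rho>) powr (1 - \<alpha>) / (\<rho> * (1 - \<alpha>))\<close>, in either variable.\<close>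

lemma has_integral_weighted_kat_kernel_left:
  assumes "0 < a" "a \<le> s" "s \<le> t" and "0 < \<alpha>" "\<alpha> < 1" and "0 < \<rho>"
  shows "((\<lambda>\<tau>. \<tau> powr (\<rho> - 1) * kat_kernel \<alpha> \<rho> t \<tau>) has_integral
     ((t powr \<rho> - a powr \<rho>) powr (1 - \<alpha>) - (t powr \<rho> - s powr \<rho>) powr (1 - \<alpha>)) / (\<rho> * (1 - \<alpha>))) {a..s}"
proof -
  define A where "A \<tau> = - ((t powr \<rho> - \<tau> powr \<rho>) powr (1 - \<alpha>)) / (\<rho> * (1 - \<alpha>))" for \<tau>
  have "((\<lambda>\<tau>. \<tau> powr (\<rho> - 1) * kat_kernel \<alpha> \<rho> t \<tau>) has_integral (A s - A a)) {a..s}"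
  proof (rule fundamental_theorem_of_calculus_interior)
    show "continuous_on {a..s} A"
      unfolding A_def using assms
      by (intro continuous_intros continuous_on_powr') (auto intro!: continuous_intros powr_mono2)
    show "(A has_vector_derivative \<tau> powr (\<rho> - 1) * kat_kernel \<alpha> \<rho> t \<tau>) (at \<tau>)"
      if "\<tau> \<in> {a<..<s}" for \<tau>
    proof -
      have pos: "0 < \<tau>" "0 < t powr \<rho> - \<tau> powr \<rho>"
        using that assms by (auto simp: powr_less_mono2)
      have inner: "((\<lambda>\<tau>. t powr \<rho> - \<tau> powr \<rho>) has_real_derivative - (\<rho> * \<tau> powr (\<rho> - 1))) (at \<tau>)"
        using pos by (auto intro!: derivative_eq_intros)
      have "(A has_real_derivative - ((1 - \<alpha>) * (t powr \<rho> - \<tau> powr \<rho>) powr (1 - \<alpha> - 1)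
                   * - (\<rho> * \<tau> powr (\<rho> - 1))) / (\<rho> * (1 - \<alpha>))) (at \<tau>)"
        unfolding A_def using DERIV_fun_powr[OF inner pos(2), of "1 - \<alpha>"]
        by (intro DERIV_cdivide DERIV_minus) simp
      moreover have "- ((1 - \<alpha>) * (t powr \<rho> - \<tau> powr \<rho>) powr (1 - \<alpha> - 1) * - (\<rho> * \<tau> powr (\<rho> - 1)))
          / (\<rho> * (1 - \<alpha>)) = \<tau> powr (\<rho> - 1) * kat_kernel \<alpha> \<rho> t \<tau>"
        using assms by (simp add: kat_kernel_def field_simps)
      ultimately have "(A has_real_derivative \<tau> powr (\<rho> - 1) * kat_kernel \<alpha> \<rho> t \<tau>) (at \<tau>)"
        by simp
      then show ?thesis by (simp add: has_real_derivative_iff_has_vector_derivative)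
    qed
  qed (use assms in auto)
  then show ?thesis by (simp add: A_def diff_divide_distrib)
qed

lemma has_integral_weighted_kat_kernel_right:
  assumes "0 < \<tau>" "\<tau> \<le> b" and "0 < \<alpha>" "\<alpha> < 1" and "0 < \<rho>"
  shows "((\<lambda>t. t powr (\<rho> - 1) * kat_kernel \<alpha> \<rho> t \<tau>) has_integral
     (b powr \<rho> - \<tau> powr \<rho>) powr (1 - \<alpha>) / (\<rho> * (1 - \<alpha>))) {\<tau>..b}"
proof -
  define A where "A t = (t powr \<rho> - \<tau> powr \<rho>) powr (1 - \<alpha>) / (\<rho> * (1 - \<alpha>))" for t
  have "((\<lambda>t. t powr (\<rho> - 1) * kat_kernel \<alpha> \<rho> t \<tau>) has_integral (A b - A \<tau>)) {\<tau>..b}"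
  proof (rule fundamental_theorem_of_calculus_interior)
    show "continuous_on {\<tau>..b} A"
      unfolding A_def using assms
      by (intro continuous_intros continuous_on_powr') (auto intro!: continuous_intros powr_mono2)
    show "(A has_vector_derivative t powr (\<rho> - 1) * kat_kernel \<alpha> \<rho> t \<tau>) (at t)"
      if "t \<in> {\<tau><..<b}" for t
    proof -
      have pos: "0 < t" "0 < t powr \<rho> - \<tau> powr \<rho>"
        using that assms by (auto simp: powr_less_mono2)
      have inner: "((\<lambda>t. t powr \<rho> - \<tau> powr \<rho>) has_real_derivative \<rho> * t powr (\<rho> - 1)) (at t)"
        using pos by (auto intro!: derivative_eq_intros)
      have "(A has_real_derivative (1 - \<alpha>) * (t powr \<rho> - \<tau> powr \<rho>) powr (1 - \<alpha> - 1)
                   * (\<rho> * t powr (\<rho> - 1)) / (\<rho> * (1 - \<alpha>))) (at t)"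
        unfolding A_def using DERIV_fun_powr[OF inner pos(2), of "1 - \<alpha>"]
        by (intro DERIV_cdivide) simp
      moreover have "(1 - \<alpha>) * (t powr \<rho> - \<tau> powr \<rho>) powr (1 - \<alpha> - 1) * (\<rho> * t powr (\<rho> - 1))
          / (\<rho> * (1 - \<alpha>)) = t powr (\<rho> - 1) * kat_kernel \<alpha> \<rho> t \<tau>"
        using assms by (simp add: kat_kernel_def field_simps)
      ultimately have "(A has_real_derivative t powr (\<rho> - 1) * kat_kernel \<alpha> \<rho> t \<tau>) (at t)"
        by simp
      then show ?thesis by (simp add: has_real_derivative_iff_has_vector_derivative)
    qed
  qed (use assms in auto)
  then show ?thesis using assms by (simp add: A_def)
qed

text \<open>On intervals bounded away from \<open>0\<close> the weight can be divided out again, so integrability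
  reduces to the two primitives above.\<close>

lemma absolutely_integrable_kat_kernel_left:
  assumes "0 < a" "a \<le> s" "s \<le> t" and "0 < \<alpha>" "\<alpha> < 1" and "0 < \<rho>"
    and "continuous_on {a..s} \<phi>"
  shows "(\<lambda>\<tau>. kat_kernel \<alpha> \<rho> t \<tau> * \<phi> \<tau>) absolutely_integrable_on {a..s}"
proof -
  have weight: "(\<lambda>\<tau>. \<tau> powr (\<rho> - 1) * kat_kernel \<alpha> \<rho> t \<tau>) absolutely_integrable_on {a..s}"
    using has_integral_weighted_kat_kernel_left[OF assms(1-6)]
    by (intro nonnegative_absolutely_integrable_1) auto
  have product: "(\<lambda>\<tau>. \<tau> powr (1 - \<rho>) * \<phi> \<tau> * (\<tau> powr (\<rho> - 1) * kat_kernel \<alpha> \<rho> t \<tau>))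
      absolutely_integrable_on {a..s}"
    using assms by (intro absolutely_integrable_continuous_mult weight continuous_intros) auto
  have cancel: "\<tau> powr (1 - \<rho>) * \<phi> \<tau> * (\<tau> powr (\<rho> - 1) * kat_kernel \<alpha> \<rho> t \<tau>)
      = kat_kernel \<alpha> \<rho> t \<tau> * \<phi> \<tau>" if "\<tau> \<in> {a..s}" for \<tau>
    using that assms by (simp add: powr_add[symmetric] algebra_simps)
  show ?thesis
    by (rule absolutely_integrable_spike[OF product negligible_empty]) (use cancel in auto)
qed

lemma absolutely_integrable_kat_kernel_right:
  assumes "0 < \<tau>" "\<tau> \<le> b" and "0 < \<alpha>" "\<alpha> < 1" and "0 < \<rho>"
    and "continuous_on {\<tau>..b} f"
  shows "(\<lambda>t. kat_kernel \<alpha> \<rho> t \<tau> * f t) absolutely_integrable_on {\<tau>..b}"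
proof -
  have weight: "(\<lambda>t. t powr (\<rho> - 1) * kat_kernel \<alpha> \<rho> t \<tau>) absolutely_integrable_on {\<tau>..b}"
    using has_integral_weighted_kat_kernel_right[OF assms(1-5)]
    by (intro nonnegative_absolutely_integrable_1) auto
  have product: "(\<lambda>t. t powr (1 - \<rho>) * f t * (t powr (\<rho> - 1) * kat_kernel \<alpha> \<rho> t \<tau>))
      absolutely_integrable_on {\<tau>..b}"
    using assms by (intro absolutely_integrable_continuous_mult weight continuous_intros) auto
  have cancel: "t powr (1 - \<rho>) * f t * (t powr (\<rho> - 1) * kat_kernel \<alpha> \<rho> t \<tau>)
      = kat_kernel \<alpha> \<rho> t \<tau> * f t" if "t \<in> {\<tau>..b}" for t
    using that assms by (simp add: powr_add[symmetric] algebra_simps)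
  show ?thesis
    by (rule absolutely_integrable_spike[OF product negligible_empty]) (use cancel in auto)
qed

lemma abs_integral_kat_kernel_le:
  assumes "0 < p" "p \<le> q" "q \<le> r" and \<alpha>: "0 < \<alpha>" "\<alpha> < 1" and \<rho>: "0 < \<rho>"
    and \<phi>: "continuous_on {p..q} \<phi>" "\<And>\<tau>. \<tau> \<in> {p..q} \<Longrightarrow> \<bar>\<phi> \<tau>\<bar> \<le> M * \<tau> powr (\<rho> - 1)"
  shows "\<bar>integral {p..q} (\<lambda>\<tau>. kat_kernel \<alpha> \<rho> r \<tau> * \<phi> \<tau>)\<bar>
    \<le> M * (((r powr \<rho> - p powr \<rho>) powr (1 - \<alpha>) - (r powr \<rho> - q powr \<rho>) powr (1 - \<alpha>)) / (\<rho> * (1 - \<alpha>)))"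
proof (rule abs_integral_le_has_integral)
  show "(\<lambda>\<tau>. kat_kernel \<alpha> \<rho> r \<tau> * \<phi> \<tau>) integrable_on {p..q}"
    using assms by (intro set_lebesgue_integral_eq_integral(1) absolutely_integrable_kat_kernel_left)
  show "((\<lambda>\<tau>. M * (\<tau> powr (\<rho> - 1) * kat_kernel \<alpha> \<rho> r \<tau>)) has_integral
      M * (((r powr \<rho> - p powr \<rho>) powr (1 - \<alpha>) - (r powr \<rho> - q powr \<rho>) powr (1 - \<alpha>)) / (\<rho> * (1 - \<alpha>)))) {p..q}"
    using assms by (intro has_integral_mult_right has_integral_weighted_kat_kernel_left)
  fix \<tau> assume "\<tau> \<in> {p<..<q}"
  then have "\<bar>\<phi> \<tau>\<bar> \<le> M * \<tau> powr (\<rho> - 1)" by (intro \<phi>(2)) auto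
  from mult_right_mono[OF this kat_kernel_nonneg]
  show "\<bar>kat_kernel \<alpha> \<rho> r \<tau> * \<phi> \<tau>\<bar> \<le> M * (\<tau> powr (\<rho> - 1) * kat_kernel \<alpha> \<rho> r \<tau>)"
    by (simp add: abs_mult algebra_simps)
qed

lemma abs_integral_kat_kernel_diff_le:
  assumes a: "0 < a" "a \<le> s" "s \<le> t" and \<alpha>: "0 < \<alpha>" "\<alpha> < 1" and \<rho>: "0 < \<rho>"
    and \<phi>: "continuous_on {a..s} \<phi>" "\<And>\<tau>. \<tau> \<in> {a..s} \<Longrightarrow> \<bar>\<phi> \<tau>\<bar> \<le> M * \<tau> powr (\<rho> - 1)"
  shows "\<bar>integral {a..s} (\<lambda>\<tau>. kat_kernel \<alpha> \<rho> t \<tau> * \<phi> \<tau> - kat_kernel \<alpha> \<rho> s \<tau> * \<phi> \<tau>)\<bar>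
    \<le> M * ((s powr \<rho> - a powr \<rho>) powr (1 - \<alpha>) / (\<rho> * (1 - \<alpha>)))
      - M * (((t powr \<rho> - a powr \<rho>) powr (1 - \<alpha>) - (t powr \<rho> - s powr \<rho>) powr (1 - \<alpha>)) / (\<rho> * (1 - \<alpha>)))"
proof (rule abs_integral_le_has_integral)
  define k where "k = kat_kernel \<alpha> \<rho>"
  define w where "w \<tau> = \<tau> powr (\<rho> - 1)" for \<tau> :: real
  show "(\<lambda>\<tau>. k t \<tau> * \<phi> \<tau> - k s \<tau> * \<phi> \<tau>) integrable_on {a..s}"
    unfolding k_def using assms
    by (intro integrable_diff set_lebesgue_integral_eq_integral(1) absolutely_integrable_kat_kernel_left) auto
  have "((\<lambda>\<tau>. M * (w \<tau> * k r \<tau>)) has_integral M *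
      (((r powr \<rho> - a powr \<rho>) powr (1 - \<alpha>) - (r powr \<rho> - s powr \<rho>) powr (1 - \<alpha>)) / (\<rho> * (1 - \<alpha>)))) {a..s}"
    if "s \<le> r" for r
    unfolding w_def k_def using a \<alpha> \<rho> that
    by (intro has_integral_mult_right has_integral_weighted_kat_kernel_left)
  from has_integral_diff[OF this[of s] this[of t]] a
  show "((\<lambda>\<tau>. M * (w \<tau> * k s \<tau>) - M * (w \<tau> * k t \<tau>)) has_integral
      M * ((s powr \<rho> - a powr \<rho>) powr (1 - \<alpha>) / (\<rho> * (1 - \<alpha>)))
      - M * (((t powr \<rho> - a powr \<rho>) powr (1 - \<alpha>) - (t powr \<rho> - s powr \<rho>) powr (1 - \<alpha>))
             / (\<rho> * (1 - \<alpha>)))) {a..s}"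
    by simp
  fix \<tau> assume \<tau>: "\<tau> \<in> {a<..<s}"
  have mono: "k t \<tau> \<le> k s \<tau>" unfolding k_def using \<tau> a \<alpha> \<rho> by (intro kat_kernel_antimono) auto
  have "k t \<tau> * \<phi> \<tau> - k s \<tau> * \<phi> \<tau> = - ((k s \<tau> - k t \<tau>) * \<phi> \<tau>)"
    by (simp add: algebra_simps)
  then have "\<bar>k t \<tau> * \<phi> \<tau> - k s \<tau> * \<phi> \<tau>\<bar> = (k s \<tau> - k t \<tau>) * \<bar>\<phi> \<tau>\<bar>"
    using mono by (simp add: abs_mult)
  also have "\<dots> \<le> (k s \<tau> - k t \<tau>) * (M * w \<tau>)"
    unfolding w_def using mono \<tau> by (intro mult_left_mono \<phi>(2)) auto
  finally show "\<bar>k t \<tau> * \<phi> \<tau> - k s \<tau> * \<phi> \<tau>\<bar> \<le> M * (w \<tau> * k s \<tau>) - M * (w \<tau> * k t \<tau>)"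
    by (simp add: algebra_simps)
qed

lemma kat_kernel_integral_increment_le:
  assumes a: "0 < a" "a \<le> s" "s \<le> t" and \<alpha>: "0 < \<alpha>" "\<alpha> < 1" and \<rho>: "0 < \<rho>"
    and \<phi>: "continuous_on {a..t} \<phi>" "\<And>\<tau>. \<tau> \<in> {a..t} \<Longrightarrow> \<bar>\<phi> \<tau>\<bar> \<le> M * \<tau> powr (\<rho> - 1)"
  shows "\<bar>integral {a..t} (\<lambda>\<tau>. kat_kernel \<alpha> \<rho> t \<tau> * \<phi> \<tau>) - integral {a..s} (\<lambda>\<tau>. kat_kernel \<alpha> \<rho> s \<tau> * \<phi> \<tau>)\<bar>
    \<le> M / (\<rho> * (1 - \<alpha>)) * ((s powr \<rho> - a powr \<rho>) powr (1 - \<alpha>) - (t powr \<rho> - a powr \<rho>) powr (1 - \<alpha>)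
                          + 2 * (t powr \<rho> - s powr \<rho>) powr (1 - \<alpha>))"
proof -
  define k where "k = kat_kernel \<alpha> \<rho>"
  have int: "(\<lambda>\<tau>. k r \<tau> * \<phi> \<tau>) integrable_on {a..q}" if "a \<le> q" "q \<le> r" "q \<le> t" for q r
    unfolding k_def using that a \<alpha> \<rho> continuous_on_subset[OF \<phi>(1)]
    by (intro set_lebesgue_integral_eq_integral(1) absolutely_integrable_kat_kernel_left) auto
  have "integral {a..t} (\<lambda>\<tau>. k t \<tau> * \<phi> \<tau>) - integral {a..s} (\<lambda>\<tau>. k s \<tau> * \<phi> \<tau>)
      = integral {a..s} (\<lambda>\<tau>. k t \<tau> * \<phi> \<tau> - k s \<tau> * \<phi> \<tau>) + integral {s..t} (\<lambda>\<tau>. k t \<tau> * \<phi> \<tau>)"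
    using Henstock_Kurzweil_Integration.integral_combine[OF a(2,3) int[of t t]]
      integral_diff[OF int[of s t] int[of s s]] a by simp
  then have "\<bar>integral {a..t} (\<lambda>\<tau>. k t \<tau> * \<phi> \<tau>) - integral {a..s} (\<lambda>\<tau>. k s \<tau> * \<phi> \<tau>)\<bar>
      \<le> \<bar>integral {a..s} (\<lambda>\<tau>. k t \<tau> * \<phi> \<tau> - k s \<tau> * \<phi> \<tau>)\<bar> + \<bar>integral {s..t} (\<lambda>\<tau>. k t \<tau> * \<phi> \<tau>)\<bar>"
    by (simp only: abs_triangle_ineq)
  also have "\<dots> \<le> M / (\<rho> * (1 - \<alpha>)) * ((s powr \<rho> - a powr \<rho>) powr (1 - \<alpha>) - (t powr \<rho> - a powr \<rho>) powr (1 - \<alpha>)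
                          + 2 * (t powr \<rho> - s powr \<rho>) powr (1 - \<alpha>))"
    using add_mono[OF abs_integral_kat_kernel_diff_le[OF a \<alpha> \<rho>, of \<phi> M]
                      abs_integral_kat_kernel_le[of s t t \<alpha> \<rho> \<phi> M]] a \<alpha> \<rho> \<phi> continuous_on_subset[OF \<phi>(1)]
    by (simp add: k_def diff_divide_distrib add_divide_distrib algebra_simps)
  finally show ?thesis unfolding k_def .
qed

lemma continuous_on_Icc_weighted_bound:
  fixes \<phi> :: "real \<Rightarrow> real"
  assumes "0 < a" "continuous_on {a..b} \<phi>"
  obtains M where "0 \<le> M" "\<And>\<tau>. \<tau> \<in> {a..b} \<Longrightarrow> \<bar>\<phi> \<tau>\<bar> \<le> M * \<tau> powr (\<rho> - 1)"
proof -
  have "continuous_on {a..b} (\<lambda>\<tau>. \<tau> powr (1 - \<rho>) * \<phi> \<tau>)"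
    using assms(1) by (auto intro!: continuous_intros assms(2))
  then obtain M where M: "\<And>\<tau>. \<tau> \<in> {a..b} \<Longrightarrow> \<bar>\<tau> powr (1 - \<rho>) * \<phi> \<tau>\<bar> \<le> M"
    using continuous_on_Icc_abs_bound by blast
  show ?thesis
  proof (rule that[of "max 0 M"])
    fix \<tau> assume \<tau>: "\<tau> \<in> {a..b}"
    have "\<bar>\<phi> \<tau>\<bar> = \<bar>\<tau> powr (1 - \<rho>) * \<phi> \<tau>\<bar> * \<tau> powr (\<rho> - 1)"
      using \<tau> assms by (simp add: abs_mult powr_add[symmetric])
    also have "\<dots> \<le> max 0 M * \<tau> powr (\<rho> - 1)" using M[OF \<tau>] by (intro mult_right_mono) auto
    finally show "\<bar>\<phi> \<tau>\<bar> \<le> max 0 M * \<tau> powr (\<rho> - 1)" .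
  qed simp
qed

lemma continuous_on_kat_kernel_integral:
  assumes a: "0 < a" and \<alpha>: "0 < \<alpha>" "\<alpha> < 1" and \<rho>: "0 < \<rho>"
    and \<phi>: "continuous_on {a..b} \<phi>"
  shows "continuous_on {a..b} (\<lambda>t. integral {a..t} (\<lambda>\<tau>. kat_kernel \<alpha> \<rho> t \<tau> * \<phi> \<tau>))"
proof -
  define \<beta> where "\<beta> = 1 - \<alpha>"
  define E where "E x = (x powr \<rho> - a powr \<rho>) powr \<beta>" for x
  obtain M where M: "0 \<le> M" "\<And>\<tau>. \<tau> \<in> {a..b} \<Longrightarrow> \<bar>\<phi> \<tau>\<bar> \<le> M * \<tau> powr (\<rho> - 1)"
    using continuous_on_Icc_weighted_bound[OF a \<phi>] by blast
  define B where "B s t = M / (\<rho> * \<beta>) * (\<bar>E t - E s\<bar> + 2 * \<bar>t powr \<rho> - s powr \<rho>\<bar> powr \<beta>)" for s t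
  have increment: "\<bar>integral {a..t} (\<lambda>\<tau>. kat_kernel \<alpha> \<rho> t \<tau> * \<phi> \<tau>)
                    - integral {a..s} (\<lambda>\<tau>. kat_kernel \<alpha> \<rho> s \<tau> * \<phi> \<tau>)\<bar> \<le> B s t"
    if "s \<in> {a..b}" "t \<in> {a..b}" "s \<le> t" for s t
  proof -
    have "s powr \<rho> \<le> t powr \<rho>" using that a \<rho> by (intro powr_mono2) auto
    then have "M / (\<rho> * \<beta>) * (E s - E t + 2 * (t powr \<rho> - s powr \<rho>) powr \<beta>) \<le> B s t"
      unfolding B_def using M(1) \<alpha> \<rho> by (intro mult_left_mono) (auto simp: \<beta>_def)
    then show ?thesis
      using kat_kernel_integral_increment_le[OF a _ \<open>s \<le> t\<close> \<alpha> \<rho> continuous_on_subset[OF \<phi>], of M] M(2) that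
      by (force simp: E_def \<beta>_def)
  qed
  show ?thesis
  proof (rule continuous_on_increment_bound)
    show "\<bar>integral {a..t} (\<lambda>\<tau>. kat_kernel \<alpha> \<rho> t \<tau> * \<phi> \<tau>)
           - integral {a..s} (\<lambda>\<tau>. kat_kernel \<alpha> \<rho> s \<tau> * \<phi> \<tau>)\<bar> \<le> B s t"
      if "s \<in> {a..b}" "t \<in> {a..b}" for s t
      using increment[OF that] increment[OF that(2,1)] unfolding B_def
      by (cases "s \<le> t") (auto simp: abs_minus_commute)
    show "(B s \<longlongrightarrow> 0) (at s within {a..b})" if "s \<in> {a..b}" for s
    proof -
      have "continuous_on {a..b} E"
        unfolding E_def using a \<alpha> \<rho>
        by (intro continuous_on_powr') (auto intro!: continuous_intros powr_mono2 simp: \<beta>_def)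
      then have "(E \<longlongrightarrow> E s) (at s within {a..b})"
        using that by (simp add: continuous_on_def)
      moreover have "((\<lambda>t. \<bar>t powr \<rho> - s powr \<rho>\<bar> powr \<beta>) \<longlongrightarrow> \<bar>s powr \<rho> - s powr \<rho>\<bar> powr \<beta>) (at s within {a..b})"
        using that a \<alpha> by (intro tendsto_powr' tendsto_intros) (auto simp: \<beta>_def)
      ultimately have "(B s \<longlongrightarrow> M / (\<rho> * \<beta>) * (\<bar>E s - E s\<bar> + 2 * 0)) (at s within {a..b})"
        unfolding B_def by (intro tendsto_intros) auto
      then show ?thesis by simp
    qed
  qed
qed

lemma integral_swap_kat_kernel:
  assumes a: "0 < a" and \<alpha>: "0 < \<alpha>" "\<alpha> < 1" and \<rho>: "0 < \<rho>"
    and f: "continuous_on {a..b} f" and \<phi>: "continuous_on {a..b} \<phi>"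
  shows "integral {a..b} (\<lambda>t. f t * integral {a..t} (\<lambda>\<tau>. kat_kernel \<alpha> \<rho> t \<tau> * \<phi> \<tau>))
       = integral {a..b} (\<lambda>\<tau>. \<phi> \<tau> * integral {\<tau>..b} (\<lambda>t. kat_kernel \<alpha> \<rho> t \<tau> * f t))"
proof -
  define k where "k = kat_kernel \<alpha> \<rho>"
  define G where "G t \<tau> = k t \<tau> * (indicator {a..b} \<tau> * \<phi> \<tau>) * (indicator {a..b} t * f t)" for t \<tau>
  have "(\<lambda>t. indicator {a..b} t * f t) \<in> borel_measurable borel"
    "(\<lambda>\<tau>. indicator {a..b} \<tau> * \<phi> \<tau>) \<in> borel_measurable borel"
    using borel_measurable_continuous_on_indicator[OF _ f] borel_measurable_continuous_on_indicator[OF _ \<phi>]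
    by simp_all
  then have G_measurable: "(\<lambda>(t, \<tau>). G t \<tau>) \<in> borel_measurable (lborel \<Otimes>\<^sub>M lborel)"
    unfolding G_def k_def kat_kernel_def case_prod_beta' by measurable
  have G_eq: "G t \<tau> = k t \<tau> * \<phi> \<tau> * f t" if "t \<in> {a..b}" "\<tau> \<in> {a..b}" for t \<tau>
    using that by (simp add: G_def)
  have rows: "G t absolutely_integrable_on {a..t}" if t: "t \<in> {a..b}" for t
  proof -
    have "(\<lambda>\<tau>. k t \<tau> * \<phi> \<tau> * f t) absolutely_integrable_on {a..t}"
      unfolding k_def using t a \<alpha> \<rho> continuous_on_subset[OF \<phi>]
      by (intro set_integrable_mult_left absolutely_integrable_kat_kernel_left) auto
    then show ?thesis
      by (rule absolutely_integrable_spike[OF _ negligible_empty]) (use t G_eq in auto)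
  qed
  have columns: "(\<lambda>t. G t \<tau>) absolutely_integrable_on {\<tau>..b}" if \<tau>: "\<tau> \<in> {a..b}" for \<tau>
  proof -
    have "(\<lambda>t. k t \<tau> * f t * \<phi> \<tau>) absolutely_integrable_on {\<tau>..b}"
      unfolding k_def using \<tau> a \<alpha> \<rho> continuous_on_subset[OF f]
      by (intro set_integrable_mult_left absolutely_integrable_kat_kernel_right) auto
    then show ?thesis
      by (rule absolutely_integrable_spike[OF _ negligible_empty]) (use \<tau> G_eq in auto)
  qed
  have "continuous_on {a..b} (\<lambda>t. \<bar>f t\<bar> * integral {a..t} (\<lambda>\<tau>. k t \<tau> * \<bar>\<phi> \<tau>\<bar>))"
    unfolding k_def using a \<alpha> \<rho> f \<phi> by (intro continuous_on_kat_kernel_integral continuous_intros)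
  then obtain B where B: "\<And>t. t \<in> {a..b} \<Longrightarrow> \<bar>\<bar>f t\<bar> * integral {a..t} (\<lambda>\<tau>. k t \<tau> * \<bar>\<phi> \<tau>\<bar>)\<bar> \<le> B"
    using continuous_on_Icc_abs_bound by blast
  have "integral {a..t} (\<lambda>\<tau>. \<bar>G t \<tau>\<bar>) \<le> B" if t: "t \<in> {a..b}" for t
  proof -
    have "integral {a..t} (\<lambda>\<tau>. \<bar>G t \<tau>\<bar>) = integral {a..t} (\<lambda>\<tau>. \<bar>f t\<bar> * (k t \<tau> * \<bar>\<phi> \<tau>\<bar>))"
      using t by (intro integral_cong) (auto simp: G_eq abs_mult k_def)
    then show ?thesis using B[OF t] by simp
  qed
  note swap = integral_swap_triangle[OF G_measurable rows columns this]
  have row_eq: "integral {a..t} (G t) = f t * integral {a..t} (\<lambda>\<tau>. k t \<tau> * \<phi> \<tau>)" if "t \<in> {a..b}" for t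
  proof -
    have "integral {a..t} (G t) = integral {a..t} (\<lambda>\<tau>. f t * (k t \<tau> * \<phi> \<tau>))"
      using that by (intro integral_cong) (auto simp: G_eq)
    then show ?thesis by simp
  qed
  have column_eq: "integral {\<tau>..b} (\<lambda>t. G t \<tau>) = \<phi> \<tau> * integral {\<tau>..b} (\<lambda>t. k t \<tau> * f t)" if "\<tau> \<in> {a..b}" for \<tau>
  proof -
    have "integral {\<tau>..b} (\<lambda>t. G t \<tau>) = integral {\<tau>..b} (\<lambda>t. \<phi> \<tau> * (k t \<tau> * f t))"
      using that by (intro integral_cong) (auto simp: G_eq)
    then show ?thesis by simp
  qed
  have "integral {a..b} (\<lambda>t. f t * integral {a..t} (\<lambda>\<tau>. k t \<tau> * \<phi> \<tau>))
      = integral {a..b} (\<lambda>t. integral {a..t} (G t))"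
    by (intro integral_cong) (simp add: row_eq)
  also have "\<dots> = integral {a..b} (\<lambda>\<tau>. integral {\<tau>..b} (\<lambda>t. G t \<tau>))"
    by (rule swap)
  also have "\<dots> = integral {a..b} (\<lambda>\<tau>. \<phi> \<tau> * integral {\<tau>..b} (\<lambda>t. k t \<tau> * f t))"
    by (intro integral_cong) (simp add: column_eq)
  finally show ?thesis unfolding k_def .
qed

section \<open>Caputo--Katugampola derivatives of \<open>C\<^sup>1\<close> functions\<close>

lemma caputo_left_eq_kat_kernel_integral:
  assumes "\<forall>\<tau>\<in>{a..b}. (y has_real_derivative y' \<tau>) (at \<tau> within {a..b})" and "t \<in> {a..b}"
  shows "caputo_left a \<alpha> \<rho> y t
           = \<rho> powr \<alpha> / Gamma (1 - \<alpha>) * integral {a..t} (\<lambda>\<tau>. kat_kernel \<alpha> \<rho> t \<tau> * y' \<tau>)"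
proof -
  have "integral {a..t} (\<lambda>\<tau>. (t powr \<rho> - \<tau> powr \<rho>) powr (- \<alpha>) * deriv y \<tau>)
      = integral {a..t} (\<lambda>\<tau>. kat_kernel \<alpha> \<rho> t \<tau> * y' \<tau>)"
  proof (rule integral_spike[of "{a, b}"])
    fix \<tau> assume \<tau>: "\<tau> \<in> {a..t} - {a, b}"
    then have "at \<tau> within {a..b} = at \<tau>"
      using assms(2) by (intro at_within_interior) auto
    then have "deriv y \<tau> = y' \<tau>"
      using assms \<tau> by (intro DERIV_imp_deriv) (metis DiffD1 atLeastAtMost_iff order_trans)
    then show "kat_kernel \<alpha> \<rho> t \<tau> * y' \<tau> = (t powr \<rho> - \<tau> powr \<rho>) powr (- \<alpha>) * deriv y \<tau>"
      by (simp add: kat_kernel_def)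
  qed simp
  then show ?thesis unfolding caputo_left_def by simp
qed

lemma continuous_on_caputo_left:
  assumes "0 < a" "0 < \<alpha>" "\<alpha> < 1" "0 < \<rho>" and "C1_on a b y"
  shows "continuous_on {a..b} (caputo_left a \<alpha> \<rho> y)"
proof -
  obtain y' where y': "\<forall>\<tau>\<in>{a..b}. (y has_real_derivative y' \<tau>) (at \<tau> within {a..b})"
    "continuous_on {a..b} y'"
    using assms(5) unfolding C1_on_def by blast
  have "continuous_on {a..b} (\<lambda>t. \<rho> powr \<alpha> / Gamma (1 - \<alpha>)
          * integral {a..t} (\<lambda>\<tau>. kat_kernel \<alpha> \<rho> t \<tau> * y' \<tau>))"
    using assms by (intro continuous_intros continuous_on_kat_kernel_integral y'(2))
  then show ?thesis
    by (rule continuous_on_cong[THEN iffD1, rotated 2])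
       (auto simp: caputo_left_eq_kat_kernel_integral[OF y'(1)])
qed

lemma caputo_left_add_scaled:
  assumes "0 < a" "0 < \<alpha>" "\<alpha> < 1" "0 < \<rho>" and "t \<in> {a..b}"
    and x: "\<forall>\<tau>\<in>{a..b}. (x has_real_derivative x' \<tau>) (at \<tau> within {a..b})" "continuous_on {a..b} x'"
    and h: "\<forall>\<tau>\<in>{a..b}. (h has_real_derivative h' \<tau>) (at \<tau> within {a..b})" "continuous_on {a..b} h'"
  shows "caputo_left a \<alpha> \<rho> (\<lambda>s. x s + c * h s) t = caputo_left a \<alpha> \<rho> x t + c * caputo_left a \<alpha> \<rho> h t"
proof -
  have "\<forall>\<tau>\<in>{a..b}. ((\<lambda>s. x s + c * h s) has_real_derivative x' \<tau> + c * h' \<tau>) (at \<tau> within {a..b})"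
    using x(1) h(1) by (auto intro!: derivative_eq_intros)
  note combined = caputo_left_eq_kat_kernel_integral[OF this assms(5)]
  have int: "(\<lambda>\<tau>. kat_kernel \<alpha> \<rho> t \<tau> * \<phi> \<tau>) integrable_on {a..t}" if "continuous_on {a..b} \<phi>" for \<phi>
    using assms(1-5) continuous_on_subset[OF that]
    by (intro set_lebesgue_integral_eq_integral(1) absolutely_integrable_kat_kernel_left) auto
  have "integral {a..t} (\<lambda>\<tau>. kat_kernel \<alpha> \<rho> t \<tau> * (x' \<tau> + c * h' \<tau>))
      = integral {a..t} (\<lambda>\<tau>. kat_kernel \<alpha> \<rho> t \<tau> * x' \<tau>) + c * integral {a..t} (\<lambda>\<tau>. kat_kernel \<alpha> \<rho> t \<tau> * h' \<tau>)"
    using integral_add[OF int[OF x(2)] integrable_on_cmult_right[OF int[OF h(2)], of c]]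
    by (simp add: algebra_simps)
  then show ?thesis
    unfolding combined caputo_left_eq_kat_kernel_integral[OF x(1) assms(5)]
      caputo_left_eq_kat_kernel_integral[OF h(1) assms(5)]
    by (simp add: algebra_simps)
qed

lemma C1_on_add_scaled:
  assumes "C1_on a b x" "C1_on a b h"
  shows "C1_on a b (\<lambda>t. x t + c * h t)"
proof -
  obtain x' h' where "\<forall>\<tau>\<in>{a..b}. (x has_real_derivative x' \<tau>) (at \<tau> within {a..b})" "continuous_on {a..b} x'"
    "\<forall>\<tau>\<in>{a..b}. (h has_real_derivative h' \<tau>) (at \<tau> within {a..b})" "continuous_on {a..b} h'"
    using assms unfolding C1_on_def by blast
  then show ?thesis
    unfolding C1_on_def
    by (intro exI[of _ "\<lambda>t. x' t + c * h' t"]) (auto intro!: derivative_eq_intros continuous_intros)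
qed

lemma frac_norm_scale_le:
  assumes "0 < a" "a \<le> b" "0 < \<alpha>" "\<alpha> < 1" "0 < \<rho>" and "C1_on a b h"
  shows "frac_norm a b \<alpha> \<rho> (\<lambda>t. c * h t) \<le> \<bar>c\<bar> * frac_norm a b \<alpha> \<rho> h"
proof -
  obtain h' where h': "\<forall>\<tau>\<in>{a..b}. (h has_real_derivative h' \<tau>) (at \<tau> within {a..b})"
    "continuous_on {a..b} h'"
    using assms(6) unfolding C1_on_def by blast
  have "caputo_left a \<alpha> \<rho> (\<lambda>t. 0 + c * h t) t = caputo_left a \<alpha> \<rho> (\<lambda>_. 0) t + c * caputo_left a \<alpha> \<rho> h t"
    if "t \<in> {a..b}" for t
    using assms(1,3-5) that h' by (intro caputo_left_add_scaled[where x' = "\<lambda>_. 0"]) auto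
  then have scaled: "caputo_left a \<alpha> \<rho> (\<lambda>t. c * h t) t = c * caputo_left a \<alpha> \<rho> h t"
    if "t \<in> {a..b}" for t
    using that by (simp add: caputo_left_def)
  have "continuous_on {a..b} h"
    using assms(6) by (rule C1_on_imp_continuous_on)
  moreover have "continuous_on {a..b} (caputo_left a \<alpha> \<rho> h)"
    using assms by (intro continuous_on_caputo_left)
  moreover have "(SUP t\<in>{a..b}. \<bar>caputo_left a \<alpha> \<rho> (\<lambda>t. c * h t) t\<bar>)
      = (SUP t\<in>{a..b}. \<bar>c * caputo_left a \<alpha> \<rho> h t\<bar>)"
    by (rule SUP_cong) (simp_all add: scaled)
  ultimately show ?thesis
    unfolding frac_norm_def distrib_left
    by (intro add_mono) (simp_all add: SUP_abs_scale_le[OF assms(2)])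
qed

lemma integral_mult_caputo_left:
  assumes "0 < a" "0 < \<alpha>" "\<alpha> < 1" "0 < \<rho>" and "continuous_on {a..b} f"
    and h: "\<forall>\<tau>\<in>{a..b}. (h has_real_derivative h' \<tau>) (at \<tau> within {a..b})" "continuous_on {a..b} h'"
  shows "integral {a..b} (\<lambda>t. f t * caputo_left a \<alpha> \<rho> h t)
       = integral {a..b} (\<lambda>\<tau>. h' \<tau> * int_right b \<alpha> \<rho> f \<tau>)"
proof -
  define c where "c = \<rho> powr \<alpha> / Gamma (1 - \<alpha>)"
  have "integral {a..b} (\<lambda>t. f t * caputo_left a \<alpha> \<rho> h t)
      = integral {a..b} (\<lambda>t. c * (f t * integral {a..t} (\<lambda>\<tau>. kat_kernel \<alpha> \<rho> t \<tau> * h' \<tau>)))"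
    by (intro integral_cong) (simp add: caputo_left_eq_kat_kernel_integral[OF h(1)] c_def)
  also have "\<dots> = c * integral {a..b} (\<lambda>\<tau>. h' \<tau> * integral {\<tau>..b} (\<lambda>t. kat_kernel \<alpha> \<rho> t \<tau> * f t))"
    using integral_swap_kat_kernel[OF assms(1-5) h(2)] by simp
  also have "\<dots> = integral {a..b} (\<lambda>\<tau>. h' \<tau> * int_right b \<alpha> \<rho> f \<tau>)"
    by (simp add: int_right_def kat_kernel_def c_def algebra_simps flip: integral_mult_right)
  finally show ?thesis .
qed

lemma int_right_right_endpoint [simp]: "int_right b \<alpha> \<rho> f b = 0"
  by (simp add: int_right_def)

lemma integral_mult_caputo_left_by_parts:
  assumes a: "0 < a" "a \<le> b" and \<alpha>: "0 < \<alpha>" "\<alpha> < 1" and \<rho>: "0 < \<rho>"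
    and f: "continuous_on {a..b} f"
    and h: "\<forall>\<tau>\<in>{a..b}. (h has_real_derivative h' \<tau>) (at \<tau> within {a..b})" "continuous_on {a..b} h'"
    and D: "\<forall>t\<in>{a..b}. (int_right b \<alpha> \<rho> f has_real_derivative D t) (at t within {a..b})"
  shows "integral {a..b} (\<lambda>t. f t * caputo_left a \<alpha> \<rho> h t)
       = - h a * int_right b \<alpha> \<rho> f a - integral {a..b} (\<lambda>t. h t * D t)"
proof -
  define F where "F = int_right b \<alpha> \<rho> f"
  have "((\<lambda>t. h' t * F t + h t * D t) has_integral h b * F b - h a * F a) {a..b}"
  proof (rule fundamental_theorem_of_calculus[OF a(2)])
    fix t assume "t \<in> {a..b}"
    then have "((\<lambda>t. h t * F t) has_real_derivative h' t * F t + h t * D t) (at t within {a..b})"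
      using h(1) D unfolding F_def by (auto intro!: derivative_eq_intros)
    then show "((\<lambda>t. h t * F t) has_vector_derivative h' t * F t + h t * D t) (at t within {a..b})"
      by (simp add: has_real_derivative_iff_has_vector_derivative)
  qed
  moreover have "(\<lambda>t. h' t * F t) integrable_on {a..b}"
    using D unfolding F_def
    by (intro integrable_continuous_real continuous_intros h(2) DERIV_continuous_on) auto
  ultimately have "integral {a..b} (\<lambda>t. h' t * F t) + integral {a..b} (\<lambda>t. h t * D t) = - h a * F a"
    using integral_add[of "\<lambda>t. h' t * F t" "{a..b}" "\<lambda>t. h t * D t"]
      integrable_diff[of "\<lambda>t. h' t * F t + h t * D t" "{a..b}" "\<lambda>t. h' t * F t"]
    by (auto simp: F_def integral_unique)
  then show ?thesis
    using integral_mult_caputo_left[OF a(1) \<alpha> \<rho> f h] unfolding F_def by simp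
qed

lemma deriv_right_eqI:
  assumes "a < b" "t \<in> {a..b}"
    and "(int_right b \<alpha> \<rho> f has_real_derivative D) (at t within {a..b})"
  shows "deriv_right a b \<alpha> \<rho> f t = D"
  using assms vector_derivative_within_cbox[of a b t "int_right b \<alpha> \<rho> f" D]
  by (simp add: deriv_right_def has_real_derivative_iff_has_vector_derivative)

section \<open>First variation at a local minimiser\<close>

lemma local_minimizer_along_direction:
  assumes "0 < a" "a \<le> b" "0 < \<alpha>" "\<alpha> < 1" "0 < \<rho>"
    and min: "local_minimizer a b \<alpha> \<rho> L fixa xa fixb xb x"
    and h: "C1_on a b h" "fixa \<longrightarrow> h a = 0" "fixb \<longrightarrow> h b = 0"
  obtains s where "0 < s" "\<And>\<epsilon>. \<bar>\<epsilon>\<bar> < s \<Longrightarrow> J_fun a b \<alpha> \<rho> L x \<le> J_fun a b \<alpha> \<rho> L (\<lambda>t. x t + \<epsilon> * h t)"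
proof -
  obtain \<delta> where x: "admissible a b fixa xa fixb xb x" and "0 < \<delta>"
    and loc: "\<And>y. admissible a b fixa xa fixb xb y \<Longrightarrow> frac_norm a b \<alpha> \<rho> (\<lambda>t. y t - x t) < \<delta>
                 \<Longrightarrow> J_fun a b \<alpha> \<rho> L x \<le> J_fun a b \<alpha> \<rho> L y"
    using min unfolding local_minimizer_def by blast
  show ?thesis
  proof (rule that[of "\<delta> / (\<bar>frac_norm a b \<alpha> \<rho> h\<bar> + 1)"])
    fix \<epsilon> assume small: "\<bar>\<epsilon>\<bar> < \<delta> / (\<bar>frac_norm a b \<alpha> \<rho> h\<bar> + 1)"
    have "frac_norm a b \<alpha> \<rho> (\<lambda>t. (x t + \<epsilon> * h t) - x t) \<le> \<bar>\<epsilon>\<bar> * frac_norm a b \<alpha> \<rho> h"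
      using frac_norm_scale_le[of a b \<alpha> \<rho> h \<epsilon>] assms by simp
    also have "\<dots> \<le> \<bar>\<epsilon>\<bar> * \<bar>frac_norm a b \<alpha> \<rho> h\<bar>"
      by (intro mult_left_mono) auto
    also have "\<dots> < \<delta>"
      using small \<open>0 < \<delta>\<close> by (simp add: field_simps)
    finally show "J_fun a b \<alpha> \<rho> L x \<le> J_fun a b \<alpha> \<rho> L (\<lambda>t. x t + \<epsilon> * h t)"
      using x h by (intro loc) (auto simp: admissible_def C1_on_add_scaled)
  qed (use \<open>0 < \<delta>\<close> in simp)
qed

locale fractional_variational_problem =
  fixes a b \<alpha> \<rho> :: real and L :: "real \<Rightarrow> real \<Rightarrow> real \<Rightarrow> real"
  assumes ab: "0 < a" "a < b" and alpha: "0 < \<alpha>" "\<alpha> < 1" and rho: "0 < \<rho>"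
    and L_d2: "\<And>t u v. t \<in> {a..b} \<Longrightarrow> ((\<lambda>w. L t w v) has_real_derivative partial2 L t u v) (at u)"
    and L_d3: "\<And>t u v. t \<in> {a..b} \<Longrightarrow> ((\<lambda>w. L t u w) has_real_derivative partial3 L t u v) (at v)"
    and L_d2_cont: "continuous_on ({a..b} \<times> UNIV \<times> UNIV) (\<lambda>(t, u, v). partial2 L t u v)"
    and L_d3_cont: "continuous_on ({a..b} \<times> UNIV \<times> UNIV) (\<lambda>(t, u, v). partial3 L t u v)"
    and J_defined: "\<And>y. C1_on a b y \<Longrightarrow> (\<lambda>t. L t (y t) (caputo_left a \<alpha> \<rho> y t)) integrable_on {a..b}"
begin

lemma continuous_on_partials_along:
  assumes "C1_on a b y"
  shows "continuous_on {a..b} (\<lambda>t. partial2 L t (y t) (caputo_left a \<alpha> \<rho> y t))"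
    and "continuous_on {a..b} (\<lambda>t. partial3 L t (y t) (caputo_left a \<alpha> \<rho> y t))"
proof -
  have "continuous_on {a..b} y" "continuous_on {a..b} (caputo_left a \<alpha> \<rho> y)"
    using assms ab alpha rho by (auto intro: C1_on_imp_continuous_on continuous_on_caputo_left)
  then show "continuous_on {a..b} (\<lambda>t. partial2 L t (y t) (caputo_left a \<alpha> \<rho> y t))"
    and "continuous_on {a..b} (\<lambda>t. partial3 L t (y t) (caputo_left a \<alpha> \<rho> y t))"
    by (auto intro: continuous_on_compose_triple[OF L_d2_cont] continuous_on_compose_triple[OF L_d3_cont]
             continuous_on_id)
qed

lemma local_minimizer_first_variation:
  assumes min: "local_minimizer a b \<alpha> \<rho> L fixa xa fixb xb x"
    and h: "C1_on a b h" "fixa \<longrightarrow> h a = 0" "fixb \<longrightarrow> h b = 0"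
  shows "integral {a..b} (\<lambda>t. partial2 L t (x t) (caputo_left a \<alpha> \<rho> x t) * h t
           + partial3 L t (x t) (caputo_left a \<alpha> \<rho> x t) * caputo_left a \<alpha> \<rho> h t) = 0"
proof -
  have C1x: "C1_on a b x" using min by (simp add: local_minimizer_def admissible_def)
  obtain x' h' where x': "\<forall>\<tau>\<in>{a..b}. (x has_real_derivative x' \<tau>) (at \<tau> within {a..b})" "continuous_on {a..b} x'"
    and h': "\<forall>\<tau>\<in>{a..b}. (h has_real_derivative h' \<tau>) (at \<tau> within {a..b})" "continuous_on {a..b} h'"
    using C1x h(1) unfolding C1_on_def by blast
  define Cx Ch where "Cx = caputo_left a \<alpha> \<rho> x" and "Ch = caputo_left a \<alpha> \<rho> h"
  define \<Phi> where "\<Phi> \<epsilon> = integral {a..b} (\<lambda>t. L t (x t + \<epsilon> * h t) (Cx t + \<epsilon> * Ch t))" for \<epsilon>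
  have caputo_y: "caputo_left a \<alpha> \<rho> (\<lambda>t. x t + \<epsilon> * h t) t = Cx t + \<epsilon> * Ch t" if "t \<in> {a..b}" for \<epsilon> t
    unfolding Cx_def Ch_def using ab alpha rho that by (intro caputo_left_add_scaled[OF _ _ _ _ _ x' h']) auto
  have J_y: "J_fun a b \<alpha> \<rho> L (\<lambda>t. x t + \<epsilon> * h t) = \<Phi> \<epsilon>" for \<epsilon>
    unfolding J_fun_def \<Phi>_def by (intro integral_cong) (simp add: caputo_y)
  have "(\<Phi> has_real_derivative integral {a..b} (\<lambda>t. partial2 L t (x t) (Cx t) * h t
          + partial3 L t (x t) (Cx t) * Ch t)) (at 0)"
    unfolding \<Phi>_def
  proof (rule has_real_derivative_integral_along_line[OF L_d2 L_d3 L_d2_cont L_d3_cont])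
    show "continuous_on {a..b} x" "continuous_on {a..b} h"
      using C1x h(1) by (auto intro: C1_on_imp_continuous_on)
    show "continuous_on {a..b} Cx" "continuous_on {a..b} Ch"
      unfolding Cx_def Ch_def using ab alpha rho C1x h(1) by (auto intro: continuous_on_caputo_left)
    show "(\<lambda>t. L t (x t + \<epsilon> * h t) (Cx t + \<epsilon> * Ch t)) integrable_on {a..b}" for \<epsilon>
      using J_defined[OF C1_on_add_scaled[OF C1x h(1)], of \<epsilon>]
      by (rule integrable_spike[OF _ negligible_empty]) (simp add: caputo_y)
  qed
  moreover obtain s where s: "0 < s"
    "\<And>\<epsilon>. \<bar>\<epsilon>\<bar> < s \<Longrightarrow> J_fun a b \<alpha> \<rho> L x \<le> J_fun a b \<alpha> \<rho> L (\<lambda>t. x t + \<epsilon> * h t)"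
    using local_minimizer_along_direction[OF ab(1) less_imp_le[OF ab(2)] alpha rho min h] by blast
  moreover have "J_fun a b \<alpha> \<rho> L x = \<Phi> 0" using J_y[of 0] by simp
  ultimately show ?thesis
    unfolding Cx_def Ch_def J_y by (intro DERIV_local_min[of \<Phi> _ 0 s]) auto
qed

lemma local_minimizer_weak_euler_lagrange:
  assumes min: "local_minimizer a b \<alpha> \<rho> L fixa xa fixb xb x"
    and D: "\<forall>t\<in>{a..b}. (int_right b \<alpha> \<rho> (\<lambda>s. partial3 L s (x s) (caputo_left a \<alpha> \<rho> x s))
                          has_real_derivative D t) (at t within {a..b})"
      "continuous_on {a..b} D"
    and h: "C1_on a b h" "fixa \<longrightarrow> h a = 0" "fixb \<longrightarrow> h b = 0"
  shows "integral {a..b} (\<lambda>t. (partial2 L t (x t) (caputo_left a \<alpha> \<rho> x t) - D t) * h t)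
       = h a * int_right b \<alpha> \<rho> (\<lambda>s. partial3 L s (x s) (caputo_left a \<alpha> \<rho> x s)) a"
proof -
  define f g where "f = (\<lambda>s. partial3 L s (x s) (caputo_left a \<alpha> \<rho> x s))"
    and "g = (\<lambda>s. partial2 L s (x s) (caputo_left a \<alpha> \<rho> x s))"
  have "C1_on a b x" using min by (simp add: local_minimizer_def admissible_def)
  then have cf: "continuous_on {a..b} f" and cg: "continuous_on {a..b} g"
    unfolding f_def g_def by (auto intro: continuous_on_partials_along)
  obtain h' where h': "\<forall>\<tau>\<in>{a..b}. (h has_real_derivative h' \<tau>) (at \<tau> within {a..b})"
    "continuous_on {a..b} h'"
    using h(1) unfolding C1_on_def by blast
  have "continuous_on {a..b} h" "continuous_on {a..b} (caputo_left a \<alpha> \<rho> h)"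
    using h(1) ab alpha rho by (auto intro: C1_on_imp_continuous_on continuous_on_caputo_left)
  then have int: "(\<lambda>t. g t * h t) integrable_on {a..b}" "(\<lambda>t. h t * D t) integrable_on {a..b}"
    "(\<lambda>t. f t * caputo_left a \<alpha> \<rho> h t) integrable_on {a..b}"
    by (auto intro!: integrable_continuous_real continuous_intros cf cg D(2))
  have "integral {a..b} (\<lambda>t. g t * h t + f t * caputo_left a \<alpha> \<rho> h t) = 0"
    using local_minimizer_first_variation[OF min h] by (simp add: f_def g_def)
  then have "integral {a..b} (\<lambda>t. g t * h t) = h a * int_right b \<alpha> \<rho> f a + integral {a..b} (\<lambda>t. h t * D t)"
    using integral_mult_caputo_left_by_parts[OF ab(1) _ alpha rho cf h' D(1)[folded f_def]] ab int
    by (simp add: integral_add)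
  moreover have "integral {a..b} (\<lambda>t. (g t - D t) * h t)
      = integral {a..b} (\<lambda>t. g t * h t) - integral {a..b} (\<lambda>t. h t * D t)"
    using integral_diff[OF int(1,2)] by (simp add: algebra_simps)
  ultimately show ?thesis by (simp add: f_def g_def)
qed

end

theorem mainTheorem4:
  fixes a b \<alpha> \<rho> xa xb :: real
    and L :: "real \<Rightarrow> real \<Rightarrow> real \<Rightarrow> real"
    and x :: "real \<Rightarrow> real"
    and fixa fixb :: bool
  assumes ab: "0 < a" "a < b"
    and alpha: "0 < \<alpha>" "\<alpha> < 1"
    and rho: "0 < \<rho>"
    and L_d2: "\<And>t u v. t \<in> {a..b} \<Longrightarrow>
                 ((\<lambda>w. L t w v) has_real_derivative partial2 L t u v) (at u)"
    and L_d3: "\<And>t u v. t \<in> {a..b} \<Longrightarrow>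
                 ((\<lambda>w. L t u w) has_real_derivative partial3 L t u v) (at v)"
    and L_d2_cont: "continuous_on ({a..b} \<times> UNIV \<times> UNIV) (\<lambda>(t, u, v). partial2 L t u v)"
    and L_d3_cont: "continuous_on ({a..b} \<times> UNIV \<times> UNIV) (\<lambda>(t, u, v). partial3 L t u v)"
    and J_defined: "\<And>y. C1_on a b y \<Longrightarrow>
                 (\<lambda>t. L t (y t) (caputo_left a \<alpha> \<rho> y t)) integrable_on {a..b}"
    and D_right_cont: "\<And>y. C1_on a b y \<Longrightarrow>
          (\<exists>D. (\<forall>t\<in>{a..b}.
                  (int_right b \<alpha> \<rho> (\<lambda>s. partial3 L s (y s) (caputo_left a \<alpha> \<rho> y s))
                     has_real_derivative D t) (at t within {a..b}))
               \<and> continuous_on {a..b} D)"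
    and min: "local_minimizer a b \<alpha> \<rho> L fixa xa fixb xb x"
  shows "(\<forall>t\<in>{a..b}.
            partial2 L t (x t) (caputo_left a \<alpha> \<rho> x t)
            - deriv_right a b \<alpha> \<rho> (\<lambda>s. partial3 L s (x s) (caputo_left a \<alpha> \<rho> x s)) t = 0)
         \<and> (\<not> fixa \<longrightarrow>
              int_right b \<alpha> \<rho> (\<lambda>s. partial3 L s (x s) (caputo_left a \<alpha> \<rho> x s)) a = 0)
         \<and> (\<not> fixb \<longrightarrow>
              int_right b \<alpha> \<rho> (\<lambda>s. partial3 L s (x s) (caputo_left a \<alpha> \<rho> x s)) b = 0)"
proof -
  interpret fractional_variational_problem a b \<alpha> \<rho> L
    using ab alpha rho L_d2 L_d3 L_d2_cont L_d3_cont J_defined by unfold_locales auto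
  define f g where "f = (\<lambda>s. partial3 L s (x s) (caputo_left a \<alpha> \<rho> x s))"
    and "g = (\<lambda>s. partial2 L s (x s) (caputo_left a \<alpha> \<rho> x s))"
  have C1x: "C1_on a b x" using min by (simp add: local_minimizer_def admissible_def)
  obtain D where D: "\<forall>t\<in>{a..b}. (int_right b \<alpha> \<rho> f has_real_derivative D t) (at t within {a..b})"
    "continuous_on {a..b} D"
    using D_right_cont[OF C1x] unfolding f_def by blast
  have weak: "integral {a..b} (\<lambda>t. (g t - D t) * h t) = h a * int_right b \<alpha> \<rho> f a"
    if "C1_on a b h" "fixa \<longrightarrow> h a = 0" "fixb \<longrightarrow> h b = 0" for h
    using local_minimizer_weak_euler_lagrange[OF min D[unfolded f_def] that] by (simp add: f_def g_def)
  have "continuous_on {a..b} (\<lambda>t. g t - D t)"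
    unfolding g_def by (intro continuous_intros continuous_on_partials_along C1x D(2))
  then have EL: "g t - D t = 0" if "t \<in> {a..b}" for t
    by (rule fundamental_lemma_calculus_of_variations[OF ab(2) _ _ that]) (simp add: weak)
  have "int_right b \<alpha> \<rho> f a = 0" if "\<not> fixa"
  proof -
    have "C1_on a b (\<lambda>t. b - t)"
      unfolding C1_on_def by (intro exI[of _ "\<lambda>_. -1"]) (auto intro!: derivative_eq_intros)
    then have "(b - a) * int_right b \<alpha> \<rho> f a = integral {a..b} (\<lambda>t. (g t - D t) * (b - t))"
      using weak[of "\<lambda>t. b - t"] that by simp
    also have "\<dots> = integral {a..b} (\<lambda>t. 0)" using EL by (intro integral_cong) simp
    also have "\<dots> = 0" by simp
    finally show ?thesis using ab by simp
  qed
  moreover have "deriv_right a b \<alpha> \<rho> f t = D t" if "t \<in> {a..b}" for t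
    using D(1) ab(2) that by (intro deriv_right_eqI) auto
  ultimately show ?thesis
    using EL by (simp add: f_def g_def)
qed

end
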